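(* Consider the two-sided market model described in the context and the social welfare $$\mathcal S(x_t,y_t)=\int_{x_t}^{\infty}\phi\Big(\frac{\sqrt{T_0\int_{y_t}^{\infty}y^{1-\beta}dy}}{\sqrt{\int_{x_t}^{\infty}x^{1-\gamma}dx}}\,x\Big)x^{-\gamma}dx+\lambda\sqrt{T_0}\sqrt{\int_{x_t}^{\infty}x^{1-\gamma}dx}\sqrt{\int_{y_t}^{\infty}y^{1-\beta}dy}-a\int_{y_t}^{\infty}y^{1-\beta}dy$$ over $x_t\ge x_0$, $y_t\ge y_0$. Then the welfare-maximizing thresholds are $x_t=x_0$ and $$y_t=\begin{cases} y_0, & \text{if } a\leq \frac{1}{2}\big(\int_{x_0}^{\infty}\phi'(x\bar Y)x^{1-\gamma}dx+\lambda \bar X\big),\\ \widehat{y}, & \text{if } a> \frac{1}{2}\big(\int_{x_0}^{\infty}\phi'(x\bar Y)x^{1-\gamma}dx+\lambda \bar X\big),\end{cases}$$ where $\widehat y$ is the solution $y_t$ of $$a-\frac{1}{2}\Big(\int_{x_0}^{\infty}\phi'\Big(x\sqrt{\bar Y\textstyle\int_{y_t}^{\infty}y^{1-\beta}dy}\Big)x^{1-\gamma}dx+\lambda \bar X\Big)\frac{\sqrt{\bar Y}}{\sqrt{\int_{y_t}^{\infty}y^{1-\beta}dy}}=0.$$ In terms of prices implementing the social optimum: if $a\leq \frac{1}{2}(\int_{x_0}^{\infty}\phi'(x\bar Y)x^{1-\gamma}dx+\lambda \bar X)$, then $\widehat b_{opt}\le \frac{\lambda}{\gamma-2}x_0^{2-\gamma}-a$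 and $\widehat c_{opt}\le \phi(\frac{1}{\beta-2}y_0^{2-\beta}x_0)$; if $a> \frac{1}{2}(\int_{x_0}^{\infty}\phi'(x\bar Y)x^{1-\gamma}dx+\lambda \bar X)$, then $$\widehat b_{opt}=\Big(\frac{2\lambda}{\frac{1}{\bar X}\int_{x_0}^{\infty}\phi'\big(\sqrt{\bar Y\frac{1}{\beta-2}\widehat{y}^{2-\beta}}\,x\big)x^{1-\gamma}dx+\lambda}-1\Big)a,\qquad \widehat c_{opt}\le \phi\Big(\sqrt{\bar Y\tfrac{1}{\beta-2}\widehat{y}^{2-\beta}}\,x_0\Big).$$
   Context: Model (a monopolist ISP between consumers and content providers (CPs)). Fix exponents $\gamma>2$, $\beta>2$. Consumer types $x$ have density $x^{-\gamma}$ on $x\ge x_0:=(\frac{1}{\gamma-1})^{\frac{1}{\gamma-1}}$; CP types $y$ have density $y^{-\beta}$ on $y\ge y_0:=(\frac{1}{\beta-1})^{\frac{1}{\beta-1}}$. $\bar X=\int_{x_0}^\infty x^{1-\gamma}dx=\frac{x_0^{2-\gamma}}{\gamma-2}$, $\bar Y=\int_{y_0}^\infty y^{1-\beta}dy=\frac{y_0^{2-\beta}}{\beta-2}$, $T_0=\bar X\bar Y$. If consumers of types $\ge x_t$ and CPs of types $\ge y_t$ participate, total traffic is $T=\sqrt{T_0\int_{x_t}^\infty x^{1-\gamma}dx\int_{y_t}^\infty y^{1-\beta}dy}$ and speed is $T_0/T$. A participating consumer of type $x$ gets utility $\phi\big(\int_{y_t}^\infty \frac{T_0}{T}x y^{1-\beta}dy\big)-c$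 ($c$ = membership fee); a participating CP of type $y$ gets $\lambda\int_{x_t}^\infty\frac{T_0}{T}x^{1-\gamma}y\,dx-by-ay$, with $\lambda>0$ an exchange rate, $a\ge0$ the CP cost parameter, $b$ the CP fee. The function $\phi$ is a differentiable, nonnegative, increasing, concave function on $[0,\infty)$. Prices $(b,c)$ implement thresholds $(x_t,y_t)$ when exactly consumers of type $\ge x_t$ and CPs of type $\ge y_t$ have nonnegative utility; $(\widehat b_{opt},\widehat c_{opt})$ denote prices implementing the welfare-maximizing thresholds. *)

theory Defs
  imports "HOL-Analysis.Analysis"
begin

text \<open>Two-sided market model (monopolist ISP). Parameters: exponents g (gamma), be (beta),
  exchange rate lam (lambda), CP cost parameter a, consumer value function phi.\<close>

definition x0 :: "real \<Rightarrow> real" where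
  "x0 g = (1 / (g - 1)) powr (1 / (g - 1))"

definition y0 :: "real \<Rightarrow> real" where
  "y0 be = (1 / (be - 1)) powr (1 / (be - 1))"

definition Xint :: "real \<Rightarrow> real \<Rightarrow> real" where
  "Xint g xt = (LBINT x:{xt..}. x powr (1 - g))"

definition Yint :: "real \<Rightarrow> real \<Rightarrow> real" where
  "Yint be yt = (LBINT y:{yt..}. y powr (1 - be))"

definition Xbar :: "real \<Rightarrow> real" where
  "Xbar g = x0 g powr (2 - g) / (g - 2)"

definition Ybar :: "real \<Rightarrow> real" where
  "Ybar be = y0 be powr (2 - be) / (be - 2)"

definition T0 :: "real \<Rightarrow> real \<Rightarrow> real" where
  "T0 g be = Xbar g * Ybar be"

text \<open>Total traffic when consumers of type >= xt and CPs of type >= yt participate.\<close>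
definition traffic :: "real \<Rightarrow> real \<Rightarrow> real \<Rightarrow> real \<Rightarrow> real" where
  "traffic g be xt yt = sqrt (T0 g be * Xint g xt * Yint be yt)"

definition cons_util ::
  "real \<Rightarrow> real \<Rightarrow> (real \<Rightarrow> real) \<Rightarrow> real \<Rightarrow> real \<Rightarrow> real \<Rightarrow> real \<Rightarrow> real" where
  "cons_util g be phi c xt yt x =
     phi (LBINT y:{yt..}. T0 g be / traffic g be xt yt * x * y powr (1 - be)) - c"

definition cp_util ::
  "real \<Rightarrow> real \<Rightarrow> real \<Rightarrow> real \<Rightarrow> real \<Rightarrow> real \<Rightarrow> real \<Rightarrow> real \<Rightarrow> real" where
  "cp_util g be lam a b xt yt y =
     lam * (LBINT x:{xt..}. T0 g be / traffic g be xt yt * x powr (1 - g) * y) - b * y - a * y"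

text \<open>Prices (b,c) implement thresholds (xt,yt): every consumer type >= xt and every CP type
  >= yt has nonnegative utility, while every existing type below the threshold has
  nonpositive utility (indifferent marginal agents are resolved in favour of the threshold).\<close>
definition implements ::
  "real \<Rightarrow> real \<Rightarrow> real \<Rightarrow> real \<Rightarrow> (real \<Rightarrow> real) \<Rightarrow> real \<Rightarrow> real \<Rightarrow> real \<Rightarrow> real \<Rightarrow> bool" where
  "implements g be lam a phi b c xt yt \<longleftrightarrow>
     (\<forall>x\<ge>x0 g. xt \<le> x \<longrightarrow> cons_util g be phi c xt yt x \<ge> 0) \<and>
     (\<forall>x\<ge>x0 g. x < xt \<longrightarrow> cons_util g be phi c xt yt x \<le> 0) \<and>
     (\<forall>y\<ge>y0 be. yt \<le> y \<longrightarrow> cp_util g be lam a b xt yt y \<ge> 0) \<and>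
     (\<forall>y\<ge>y0 be. y < yt \<longrightarrow> cp_util g be lam a b xt yt y \<le> 0)"

definition welfare ::
  "real \<Rightarrow> real \<Rightarrow> real \<Rightarrow> real \<Rightarrow> (real \<Rightarrow> real) \<Rightarrow> real \<Rightarrow> real \<Rightarrow> real" where
  "welfare g be lam a phi xt yt =
     (LBINT x:{xt..}. phi (sqrt (T0 g be * Yint be yt) / sqrt (Xint g xt) * x) * x powr (- g))
     + lam * sqrt (T0 g be) * sqrt (Xint g xt) * sqrt (Yint be yt)
     - a * Yint be yt"

definition welfare_opt ::
  "real \<Rightarrow> real \<Rightarrow> real \<Rightarrow> real \<Rightarrow> (real \<Rightarrow> real) \<Rightarrow> real \<Rightarrow> real \<Rightarrow> bool" where
  "welfare_opt g be lam a phi xt yt \<longleftrightarrow>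
     xt \<ge> x0 g \<and> yt \<ge> y0 be \<and>
     (\<forall>x'\<ge>x0 g. \<forall>y'\<ge>y0 be. welfare g be lam a phi x' y' \<le> welfare g be lam a phi xt yt)"

definition a_crit :: "real \<Rightarrow> real \<Rightarrow> real \<Rightarrow> (real \<Rightarrow> real) \<Rightarrow> real" where
  "a_crit g be lam phi =
     1/2 * ((LBINT x:{x0 g..}. deriv phi (x * Ybar be) * x powr (1 - g)) + lam * Xbar g)"

definition yhat_eq ::
  "real \<Rightarrow> real \<Rightarrow> real \<Rightarrow> real \<Rightarrow> (real \<Rightarrow> real) \<Rightarrow> real \<Rightarrow> bool" where
  "yhat_eq g be lam a phi yt \<longleftrightarrow>
     a - 1/2 * ((LBINT x:{x0 g..}. deriv phi (x * sqrt (Ybar be * Yint be yt)) * x powr (1 - g))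
                + lam * Xbar g) * sqrt (Ybar be) / sqrt (Yint be yt) = 0"

end

theory Submission
  imports Defs
begin

text \<open>With every consumer type served, a consumer of type \<open>x\<close> receives the content volume
  \<open>c x\<close>, where \<open>c = sqrt (Ybar * Yint y\<^sub>t)\<close> ranges over \<open>(0, Ybar]\<close>, and the welfare becomes
  \<open>V c = G c + lam Xbar c - a c\<^sup>2 / Ybar\<close> with the concave surplus \<open>G c = \<integral> \<phi>(c x) x\<^sup>-\<^sup>\<gamma> dx\<close>.
  Concavity of \<open>\<phi>\<close> gives \<open>V c \<le> V c\<^sub>1 + (c - c\<^sub>1) V'(c\<^sub>1) - a (c - c\<^sub>1)\<^sup>2 / Ybar\<close>; hence \<open>V\<close> is maximal
  at \<open>c = Ybar\<close> (that is \<open>y\<^sub>t = y\<^sub>0\<close>) when \<open>V'(Ybar) = 2 (a_crit - a) \<ge> 0\<close>, and otherwise at the unique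
  zero of the strictly decreasing \<open>V'\<close>, which is the first-order condition defining \<open>y-hat\<close>.
  Raising \<open>x\<^sub>t\<close> above \<open>x\<^sub>0\<close> strictly lowers welfare: after the substitution \<open>x = k w\<close> the bound
  \<open>\<phi>(K t) \<le> K \<phi>(t)\<close> for \<open>K \<ge> 1\<close> controls the consumer term, while the traffic term strictly
  decreases. The prices follow from the participation constraints of the marginal types.\<close>

locale concave_utility =
  fixes phi :: "real \<Rightarrow> real"
  assumes differentiable: "phi differentiable_on {0..}"
    and nonneg: "\<forall>t\<ge>0. phi t \<ge> 0"
    and mono: "mono_on {0..} phi"
    and concave: "concave_on {0..} phi"
begin

lemma has_real_derivative_deriv:
  assumes "t > 0" shows "(phi has_real_derivative deriv phi t) (at t)"
proof -
  have "at t within {0..} = at t"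
    by (rule at_within_interior) (use assms in auto)
  moreover have "phi differentiable (at t within {0..})"
    using differentiable assms by (simp add: differentiable_on_def)
  ultimately have "phi differentiable (at t)" by simp
  then show ?thesis by (simp add: DERIV_deriv_iff_real_differentiable)
qed

lemma continuous_on: "continuous_on {0..} phi"
  using differentiable differentiable_imp_continuous_on by blast

lemma below_tangent:
  assumes "t > 0" "s \<ge> 0"
  shows "phi s \<le> phi t + deriv phi t * (s - t)"
proof -
  have "convex_on {0..} (\<lambda>x. - phi x)"
    using concave by (simp add: convex_on_iff_concave)
  moreover have "((\<lambda>x. - phi x) has_field_derivative - deriv phi t) (at t within {0..})"
    using has_real_derivative_deriv[OF assms(1)]
    by (intro DERIV_minus) (rule has_field_derivative_at_within)
  ultimately have "- phi s - - phi t \<ge> - deriv phi t * (s - t)"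
    using assms by (intro convex_on_imp_above_tangent[where A = "{0..}"]) auto
  then show ?thesis by simp
qed

lemma deriv_nonneg: assumes "t > 0" shows "deriv phi t \<ge> 0"
proof -
  have "phi t \<le> phi (t + 1)" using mono assms by (simp add: mono_on_def)
  then show ?thesis using below_tangent[OF assms, of "t + 1"] assms by simp
qed

lemma secant_slope_bounds:
  assumes "0 < s" "s < u"
  shows "deriv phi u \<le> (phi u - phi s) / (u - s)" and "(phi u - phi s) / (u - s) \<le> deriv phi s"
  using below_tangent[of u s] below_tangent[of s u] assms
  by (simp_all add: divide_simps algebra_simps)

lemma deriv_antimono: assumes "0 < s" "s \<le> t" shows "deriv phi t \<le> deriv phi s"
  using secant_slope_bounds[of s t] assms by (cases "s = t") auto

lemma isCont_deriv:
  assumes t: "t > 0" shows "isCont (deriv phi) t"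
proof -
  define D where "D y = (phi y - phi t) / (y - t)" for y
  define Q where "Q s = (phi (2 * s - t) - phi s) / (s - t)" for s
  have D_lim: "(D \<longlongrightarrow> deriv phi t) (at t)"
    using has_real_derivative_deriv[OF t] unfolding D_def by (simp add: has_field_derivative_iff)
  have lin: "filterlim (\<lambda>s. 2 * s - t) (at t) (at t)"
  proof (rule filterlim_atI)
    show "((\<lambda>s. 2 * s - t) \<longlongrightarrow> t) (at t)"
      by (rule tendsto_eq_intros refl)+ simp
    show "\<forall>\<^sub>F s in at t. 2 * s - t \<noteq> t"
      by (simp add: eventually_at_filter)
  qed
  have lim2: "((\<lambda>s. 2 * D (2 * s - t) - D s) \<longlongrightarrow> 2 * deriv phi t - deriv phi t) (at t)"
    by (intro tendsto_intros filterlim_compose[OF D_lim lin] D_lim)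
  have eq: "2 * D (2 * s - t) - D s = Q s" if "s \<noteq> t" for s
  proof -
    have "2 * D (2 * s - t) = (2 * (phi (2 * s - t) - phi t)) / (2 * (s - t))"
      unfolding D_def by (simp add: algebra_simps)
    also have "\<dots> = (phi (2 * s - t) - phi t) / (s - t)"
      by (rule mult_divide_mult_cancel_left) simp
    finally have "2 * D (2 * s - t) = (phi (2 * s - t) - phi t) / (s - t)" .
    then show ?thesis by (simp add: D_def Q_def diff_divide_distrib[symmetric])
  qed
  have "(Q \<longlongrightarrow> deriv phi t) (at t)"
    using Lim_transform_eventually[OF lim2] eq by (simp add: eventually_at_filter)
  then have Q_lim: "((\<lambda>s. \<bar>Q s - deriv phi t\<bar>) \<longlongrightarrow> 0) (at t)"
    by (simp add: tendsto_rabs_zero LIM_zero)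
  \<comment> \<open>\<open>deriv phi s\<close> lies between \<open>deriv phi t\<close> and the slope \<open>Q s\<close> of the secant over \<open>s\<close>, \<open>2 s - t\<close>.\<close>
  have "\<forall>\<^sub>F s in at t. norm (deriv phi s - deriv phi t) \<le> \<bar>Q s - deriv phi t\<bar>"
    unfolding eventually_at
  proof (intro exI[of _ "t / 2"] conjI ballI impI)
    fix s assume "s \<noteq> t \<and> dist s t < t / 2"
    then have "s \<noteq> t" "\<bar>s - t\<bar> < t / 2" by (simp_all add: dist_real_def)
    then have st: "s \<noteq> t" "0 < s" "0 < 2 * s - t" by linarith+
    show "norm (deriv phi s - deriv phi t) \<le> \<bar>Q s - deriv phi t\<bar>"
    proof (cases "t < s")
      case True
      then have "Q s \<le> deriv phi s"
        using secant_slope_bounds(2)[of s "2 * s - t"] st by (simp add: Q_def)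
      moreover have "deriv phi s \<le> deriv phi t" using deriv_antimono[of t s] True t by simp
      ultimately show ?thesis by simp
    next
      case False
      have "(phi s - phi (2 * s - t)) / (s - (2 * s - t)) = - (phi (2 * s - t) - phi s) / - (s - t)"
        by simp
      also have "\<dots> = Q s" unfolding Q_def by (rule minus_divide_divide)
      finally have "deriv phi s \<le> Q s"
        using secant_slope_bounds(1)[of "2 * s - t" s] False st by simp
      moreover have "deriv phi t \<le> deriv phi s" using deriv_antimono[of s t] False st by simp
      ultimately show ?thesis by simp
    qed
  qed (use t in simp)
  from Lim_null_comparison[OF this Q_lim] show ?thesis
    unfolding isCont_def by (simp add: LIM_zero_cancel)
qed

lemma scale_le: assumes "k \<ge> 1" "t \<ge> 0" shows "phi (k * t) \<le> k * phi t"
proof -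
  have "(1 - 1/k) * phi 0 + (1/k) * phi (k * t) \<le> phi ((1 - 1/k) * 0 + (1/k) * (k * t))"
    using concave_onD[OF concave, of "1/k" 0 "k * t"] assms by simp
  moreover have "(1 - 1/k) * phi 0 \<ge> 0"
    using nonneg assms by simp
  ultimately show ?thesis using assms by (simp add: field_simps)
qed

end

lemma set_borel_measurable_continuous_on:
  fixes f :: "real \<Rightarrow> real"
  assumes "continuous_on {t..} f"
  shows "set_borel_measurable lborel {t..} f"
  using set_measurable_continuous_on[of "{t..}" f] assms by (simp add: set_borel_measurable_def)

lemma set_integral_powr_atLeast:
  fixes e t :: real
  assumes e: "e < -1" and t: "t > 0"
  shows "set_integrable lborel {t..} (\<lambda>x. x powr e)"
    and "(LBINT x:{t..}. x powr e) = - (t powr (e + 1)) / (e + 1)"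
proof -
  have hi: "((\<lambda>x. x powr e) has_integral - (t powr (e + 1)) / (e + 1)) {t..}"
    by (rule has_integral_powr_to_inf[OF e t])
  then have "(\<lambda>x. x powr e) absolutely_integrable_on {t..}"
    by (intro nonnegative_absolutely_integrable_1) (auto simp: integrable_on_def)
  then have "integrable lebesgue (\<lambda>x. indicator {t..} x *\<^sub>R x powr e)"
    by (simp add: absolutely_integrable_on_def set_integrable_def)
  moreover have "set_borel_measurable lborel {t..} (\<lambda>x. x powr e)"
    using t by (intro set_borel_measurable_continuous_on continuous_intros) auto
  ultimately show si: "set_integrable lborel {t..} (\<lambda>x. x powr e)"
    unfolding set_integrable_def set_borel_measurable_def using integrable_completion by blast
  show "(LBINT x:{t..}. x powr e) = - (t powr (e + 1)) / (e + 1)"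
    using set_borel_integral_eq_integral(2)[OF si] hi by (simp add: integral_unique)
qed

lemma set_integral_atLeast_scale:
  fixes f :: "real \<Rightarrow> real"
  assumes k: "k > 0"
  shows "(LBINT x:{k * t..}. f x) = k * (LBINT w:{t..}. f (k * w))"
proof -
  have "(LBINT x:{k * t..}. f x)
      = \<bar>k\<bar> *\<^sub>R (\<integral>w. indicator {k * t..} (0 + k * w) *\<^sub>R f (0 + k * w) \<partial>lborel)"
    unfolding set_lebesgue_integral_def by (rule lborel_integral_real_affine) (use k in simp)
  also have "(\<lambda>w. indicator {k * t..} (0 + k * w) *\<^sub>R f (0 + k * w))
      = (\<lambda>w. indicator {t..} w *\<^sub>R f (k * w))"
    using k by (auto simp: indicator_def fun_eq_iff)
  finally show ?thesis using k unfolding set_lebesgue_integral_def by simp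
qed

lemma Yint_eq_Xint: "Yint = Xint"
  unfolding Xint_def Yint_def ..

lemma Xint_eq:
  assumes "g > 2" "t > 0"
  shows "Xint g t = t powr (2 - g) / (g - 2)"
  using set_integral_powr_atLeast(2)[of "1 - g" t] assms
  by (simp add: Xint_def minus_divide_right)

lemma Xint_pos: "g > 2 \<Longrightarrow> t > 0 \<Longrightarrow> Xint g t > 0"
  by (simp add: Xint_eq)

lemma Xint_strict_antimono:
  assumes "g > 2" "0 < s" "s < t"
  shows "Xint g t < Xint g s"
proof -
  have "t powr (2 - g) < s powr (2 - g)" using assms by (intro powr_less_mono2_neg) auto
  then show ?thesis using assms by (simp add: Xint_eq divide_strict_right_mono)
qed

lemma x0_pos: "g > 2 \<Longrightarrow> x0 g > 0"
  by (simp add: x0_def)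

lemma Xint_x0: "g > 2 \<Longrightarrow> Xint g (x0 g) = Xbar g"
  by (simp add: Xint_eq x0_pos Xbar_def)

lemma Yint_y0: "be > 2 \<Longrightarrow> Yint be (y0 be) = Ybar be"
  using Xint_x0[of be] by (simp add: Yint_eq_Xint x0_def y0_def Xbar_def Ybar_def)

lemma Xbar_pos: "g > 2 \<Longrightarrow> Xbar g > 0"
  using Xint_x0 Xint_pos x0_pos by metis

lemma Ybar_pos: "be > 2 \<Longrightarrow> Ybar be > 0"
  using Yint_y0 Xint_pos[of be "y0 be"] x0_pos[of be] by (simp add: Yint_eq_Xint x0_def y0_def)

locale market = concave_utility phi for phi +
  fixes g be lam a :: real
  assumes g: "g > 2" and be: "be > 2" and lam: "lam > 0" and a: "a \<ge> 0"
begin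

lemma x0_pos: "x0 g > 0" using g by (rule x0_pos)
lemma y0_pos: "y0 be > 0" using be by (simp add: y0_def)
lemma Xbar_pos: "Xbar g > 0" using g by (rule Xbar_pos)
lemma Ybar_pos: "Ybar be > 0" using be by (rule Ybar_pos)

definition surplus :: "real \<Rightarrow> real" where
  "surplus c = (LBINT x:{x0 g..}. phi (c * x) * x powr - g)"

definition marginal_surplus :: "real \<Rightarrow> real" where
  "marginal_surplus c = (LBINT x:{x0 g..}. deriv phi (c * x) * x powr (1 - g))"

lemma set_integrable_powr_x0:
  "set_integrable lborel {x0 g..} (\<lambda>x. x powr - g)"
  "set_integrable lborel {x0 g..} (\<lambda>x. x powr (1 - g))"
  using set_integral_powr_atLeast(1)[OF _ x0_pos] g by simp_all

lemma powr_minus_mult_self: "x > 0 \<Longrightarrow> x * x powr - g = x powr (1 - g)"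
  by (simp add: powr_add[symmetric] powr_mult_base)

lemma surplus_integrable:
  assumes c: "c \<ge> 0"
  shows "set_integrable lborel {x0 g..} (\<lambda>x. phi (c * x) * x powr - g)"
proof (rule set_integrable_bound)
  show "set_integrable lborel {x0 g..} (\<lambda>x. phi 1 * x powr - g + (deriv phi 1 * c) * x powr (1 - g))"
    using set_integrable_powr_x0 by (intro set_integral_add set_integrable_mult_right)
  have "continuous_on {x0 g..} (\<lambda>x. phi (c * x))"
    by (rule continuous_on_compose2[OF continuous_on]) (use c x0_pos in \<open>auto intro!: continuous_intros\<close>)
  then show "set_borel_measurable lborel {x0 g..} (\<lambda>x. phi (c * x) * x powr - g)"
    using x0_pos by (intro set_borel_measurable_continuous_on continuous_intros) auto
  \<comment> \<open>The tangent line at \<open>1\<close> bounds \<open>phi\<close> by an affine function.\<close>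
  show "AE x in lborel. x \<in> {x0 g..} \<longrightarrow> norm (phi (c * x) * x powr - g)
         \<le> norm (phi 1 * x powr - g + (deriv phi 1 * c) * x powr (1 - g))"
  proof (intro AE_I2 impI)
    fix x assume "x \<in> {x0 g..}"
    then have x: "x > 0" using x0_pos by simp
    have "phi (c * x) \<le> phi 1 + deriv phi 1 * c * x"
      using below_tangent[of 1 "c * x"] deriv_nonneg[of 1] c x by (simp add: algebra_simps)
    then have "phi (c * x) * x powr - g \<le> (phi 1 + deriv phi 1 * c * x) * x powr - g"
      by (rule mult_right_mono) simp
    also have "\<dots> = phi 1 * x powr - g + (deriv phi 1 * c) * (x * x powr - g)"
      by (simp add: algebra_simps)
    finally have "phi (c * x) * x powr - g \<le> phi 1 * x powr - g + (deriv phi 1 * c) * x powr (1 - g)"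
      using x by (simp add: powr_minus_mult_self)
    moreover have "phi (c * x) \<ge> 0" using nonneg c x by simp
    ultimately show "norm (phi (c * x) * x powr - g)
        \<le> norm (phi 1 * x powr - g + (deriv phi 1 * c) * x powr (1 - g))"
      by simp
  qed
qed

lemma continuous_on_deriv_scaled:
  assumes "c > 0" "t > 0"
  shows "continuous_on {t..} (\<lambda>x. deriv phi (c * x))"
proof (rule continuous_at_imp_continuous_on, rule ballI)
  fix x assume "x \<in> {t..}"
  then have "c * x > 0" using assms by simp
  then show "isCont (\<lambda>x. deriv phi (c * x)) x"
    by (intro continuous_intros isCont_o2[OF _ isCont_deriv]) auto
qed

lemma marginal_surplus_integrable:
  assumes c: "c > 0"
  shows "set_integrable lborel {x0 g..} (\<lambda>x. deriv phi (c * x) * x powr (1 - g))"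
proof (rule set_integrable_bound)
  show "set_integrable lborel {x0 g..} (\<lambda>x. deriv phi (c * x0 g) * x powr (1 - g))"
    using set_integrable_powr_x0 by (intro set_integrable_mult_right)
  show "set_borel_measurable lborel {x0 g..} (\<lambda>x. deriv phi (c * x) * x powr (1 - g))"
    using continuous_on_deriv_scaled[OF c x0_pos] x0_pos
    by (intro set_borel_measurable_continuous_on continuous_intros) auto
  show "AE x in lborel. x \<in> {x0 g..} \<longrightarrow> norm (deriv phi (c * x) * x powr (1 - g))
         \<le> norm (deriv phi (c * x0 g) * x powr (1 - g))"
  proof (intro AE_I2 impI)
    fix x assume "x \<in> {x0 g..}"
    then have "0 \<le> deriv phi (c * x)" "deriv phi (c * x) \<le> deriv phi (c * x0 g)"
      using deriv_nonneg deriv_antimono c x0_pos by simp_all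
    then show "norm (deriv phi (c * x) * x powr (1 - g)) \<le> norm (deriv phi (c * x0 g) * x powr (1 - g))"
      by (simp add: abs_mult mult_right_mono)
  qed
qed

lemma surplus_le_tangent:
  assumes c1: "c1 > 0" and c2: "c2 \<ge> 0"
  shows "surplus c2 \<le> surplus c1 + (c2 - c1) * marginal_surplus c1"
proof -
  have "surplus c2 \<le> (LBINT x:{x0 g..}. phi (c1 * x) * x powr - g
                       + (c2 - c1) * (deriv phi (c1 * x) * x powr (1 - g)))"
    unfolding surplus_def
  proof (rule set_integral_mono)
    show "set_integrable lborel {x0 g..} (\<lambda>x. phi (c2 * x) * x powr - g)"
      using c2 by (rule surplus_integrable)
    show "set_integrable lborel {x0 g..}
        (\<lambda>x. phi (c1 * x) * x powr - g + (c2 - c1) * (deriv phi (c1 * x) * x powr (1 - g)))"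
      using surplus_integrable[of c1] marginal_surplus_integrable[OF c1] c1
      by (intro set_integral_add set_integrable_mult_right) auto
    fix x assume "x \<in> {x0 g..}"
    then have x: "x > 0" using x0_pos by simp
    have "phi (c2 * x) \<le> phi (c1 * x) + deriv phi (c1 * x) * (c2 - c1) * x"
      using below_tangent[of "c1 * x" "c2 * x"] c1 c2 x by (simp add: algebra_simps)
    then have "phi (c2 * x) * x powr - g \<le> (phi (c1 * x) + deriv phi (c1 * x) * (c2 - c1) * x) * x powr - g"
      by (rule mult_right_mono) simp
    also have "\<dots> = phi (c1 * x) * x powr - g + (c2 - c1) * (deriv phi (c1 * x) * (x * x powr - g))"
      by (simp add: algebra_simps)
    finally show "phi (c2 * x) * x powr - g
        \<le> phi (c1 * x) * x powr - g + (c2 - c1) * (deriv phi (c1 * x) * x powr (1 - g))"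
      using x by (simp add: powr_minus_mult_self)
  qed
  also have "\<dots> = surplus c1 + (c2 - c1) * marginal_surplus c1"
    unfolding surplus_def marginal_surplus_def
    using surplus_integrable[of c1] marginal_surplus_integrable[OF c1] c1
    by (subst set_integral_add) auto
  finally show ?thesis .
qed

lemma surplus_nonneg: assumes "c \<ge> 0" shows "surplus c \<ge> 0"
  unfolding surplus_def set_lebesgue_integral_def
  by (intro integral_nonneg_AE AE_I2) (use assms nonneg x0_pos in \<open>auto simp: indicator_def\<close>)

lemma marginal_surplus_nonneg: assumes "c > 0" shows "marginal_surplus c \<ge> 0"
  unfolding marginal_surplus_def set_lebesgue_integral_def
  by (intro integral_nonneg_AE AE_I2) (use assms deriv_nonneg x0_pos in \<open>auto simp: indicator_def\<close>)

lemma marginal_surplus_antimono: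
  assumes "0 < c1" "c1 \<le> c2"
  shows "marginal_surplus c2 \<le> marginal_surplus c1"
  unfolding marginal_surplus_def
proof (rule set_integral_mono)
  fix x assume "x \<in> {x0 g..}"
  then have "x > 0" using x0_pos by simp
  then show "deriv phi (c2 * x) * x powr (1 - g) \<le> deriv phi (c1 * x) * x powr (1 - g)"
    using deriv_antimono[of "c1 * x" "c2 * x"] assms by (intro mult_right_mono) auto
qed (use marginal_surplus_integrable assms in auto)

lemma surplus_scale_le:
  assumes K: "K \<ge> 1" and c: "c \<ge> 0"
  shows "surplus (K * c) \<le> K * surplus c"
proof -
  have "surplus (K * c) \<le> (LBINT x:{x0 g..}. K * (phi (c * x) * x powr - g))"
    unfolding surplus_def
  proof (rule set_integral_mono)
    show "set_integrable lborel {x0 g..} (\<lambda>x. phi (K * c * x) * x powr - g)"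
      using surplus_integrable[of "K * c"] K c by simp
    show "set_integrable lborel {x0 g..} (\<lambda>x. K * (phi (c * x) * x powr - g))"
      using surplus_integrable[OF c] by (intro set_integrable_mult_right)
    fix x assume "x \<in> {x0 g..}"
    then have "phi (K * (c * x)) \<le> K * phi (c * x)" using scale_le[of K "c * x"] K c x0_pos by simp
    then have "phi (K * (c * x)) * x powr - g \<le> K * phi (c * x) * x powr - g"
      by (rule mult_right_mono) simp
    then show "phi (K * c * x) * x powr - g \<le> K * (phi (c * x) * x powr - g)"
      by (simp add: mult.assoc)
  qed
  also have "\<dots> = K * surplus c" unfolding surplus_def by simp
  finally show ?thesis .
qed

lemma continuous_on_marginal_surplus:
  assumes d: "d > 0"
  shows "continuous_on {d..} marginal_surplus"
proof (rule continuous_on_sequentiallyI)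
  fix u :: "nat \<Rightarrow> real" and c
  assume u: "\<forall>n. u n \<in> {d..}" and c: "c \<in> {d..}" and lim: "u \<longlonglongrightarrow> c"
  define f where "f c' x = indicator {x0 g..} x *\<^sub>R (deriv phi (c' * x) * x powr (1 - g))" for c' x
  have integrable: "integrable lborel (f c')" if "c' \<ge> d" for c'
    using marginal_surplus_integrable[of c'] that d unfolding set_integrable_def f_def by simp
  \<comment> \<open>Since \<open>deriv phi\<close> is antitone, \<open>deriv phi (d * x0 g)\<close> dominates uniformly in \<open>n\<close>.\<close>
  have "(\<lambda>n. integral\<^sup>L lborel (f (u n))) \<longlonglongrightarrow> integral\<^sup>L lborel (f c)"
  proof (rule integral_dominated_convergence
      [where w = "\<lambda>x. indicator {x0 g..} x *\<^sub>R (deriv phi (d * x0 g) * x powr (1 - g))"])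
    show "f c \<in> borel_measurable lborel" "f (u n) \<in> borel_measurable lborel" for n
      using integrable u c by auto
    show "integrable lborel (\<lambda>x. indicator {x0 g..} x *\<^sub>R (deriv phi (d * x0 g) * x powr (1 - g)))"
      using set_integrable_mult_right[OF set_integrable_powr_x0(2)] unfolding set_integrable_def .
    show "AE x in lborel. (\<lambda>n. f (u n) x) \<longlonglongrightarrow> f c x"
    proof (rule AE_I2)
      fix x
      show "(\<lambda>n. f (u n) x) \<longlonglongrightarrow> f c x"
      proof (cases "x \<in> {x0 g..}")
        case True
        then have "isCont (deriv phi) (c * x)" using isCont_deriv c d x0_pos by simp
        then have "(\<lambda>n. deriv phi (u n * x)) \<longlonglongrightarrow> deriv phi (c * x)"
          by (rule isCont_tendsto_compose) (intro tendsto_intros lim)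
        then show ?thesis using True by (simp add: f_def tendsto_intros)
      qed (simp add: f_def)
    qed
    show "AE x in lborel. norm (f (u n) x)
        \<le> indicator {x0 g..} x *\<^sub>R (deriv phi (d * x0 g) * x powr (1 - g))" for n
    proof (rule AE_I2)
      fix x
      show "norm (f (u n) x) \<le> indicator {x0 g..} x *\<^sub>R (deriv phi (d * x0 g) * x powr (1 - g))"
      proof (cases "x \<in> {x0 g..}")
        case True
        have "d \<le> u n" using u by simp
        then have "d * x0 g \<le> u n * x" using d x0_pos True by (intro mult_mono) auto
        moreover have "0 < d * x0 g" using d x0_pos by simp
        ultimately have "0 \<le> deriv phi (u n * x)" "deriv phi (u n * x) \<le> deriv phi (d * x0 g)"
          using deriv_nonneg[of "u n * x"] deriv_antimono by simp_all
        then show ?thesis using True by (simp add: f_def abs_mult mult_right_mono)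
      qed (simp add: f_def)
    qed
  qed
  then show "(\<lambda>n. marginal_surplus (u n)) \<longlonglongrightarrow> marginal_surplus c"
    unfolding marginal_surplus_def set_lebesgue_integral_def f_def .
qed

lemma surplus_rescaled_threshold:
  assumes k: "k > 0"
  shows "(LBINT x:{k * x0 g..}. phi (s * x) * x powr - g) = k powr (1 - g) * surplus (k * s)"
proof -
  have "(LBINT x:{k * x0 g..}. phi (s * x) * x powr - g)
      = k * (LBINT w:{x0 g..}. phi (s * (k * w)) * (k * w) powr - g)"
    using k by (rule set_integral_atLeast_scale)
  also have "(LBINT w:{x0 g..}. phi (s * (k * w)) * (k * w) powr - g)
      = (LBINT w:{x0 g..}. k powr - g * (phi (k * s * w) * w powr - g))"
    using k x0_pos by (intro set_lebesgue_integral_cong) (auto simp: powr_mult ac_simps)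
  also have "\<dots> = k powr - g * surplus (k * s)"
    unfolding surplus_def by simp
  finally show ?thesis
    using k by (simp add: powr_diff powr_minus_divide)
qed

text \<open>Raising the consumer threshold by the factor \<open>k\<close> multiplies the consumer part of the welfare
  by at most \<open>k powr (1 - g / 2) \<le> 1\<close>.\<close>
lemma consumer_welfare_le:
  assumes xt: "xt \<ge> x0 g" and S: "S \<ge> 0"
  shows "(LBINT x:{xt..}. phi (S / sqrt (Xint g xt) * x) * x powr - g) \<le> surplus (S / sqrt (Xbar g))"
proof -
  define k where "k = xt / x0 g"
  define s0 where "s0 = S / sqrt (Xbar g)"
  have k: "k \<ge> 1" and xt_eq: "xt = k * x0 g"
    using xt x0_pos by (simp_all add: k_def)
  have s0: "s0 \<ge> 0" using S Xbar_pos by (simp add: s0_def)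
  have "Xint g xt = k powr (2 - g) * Xbar g"
    using g x0_pos k by (simp add: xt_eq Xint_eq Xbar_def powr_mult)
  then have "sqrt (Xint g xt) = k powr ((2 - g) / 2) * sqrt (Xbar g)"
    using k by (simp add: real_sqrt_mult powr_half_sqrt[symmetric] powr_powr)
  then have scale: "k * (S / sqrt (Xint g xt)) = k powr (g / 2) * s0"
    using k Xbar_pos by (simp add: s0_def field_simps powr_diff[symmetric] powr_add[symmetric])
  have "(LBINT x:{xt..}. phi (S / sqrt (Xint g xt) * x) * x powr - g)
      = k powr (1 - g) * surplus (k * (S / sqrt (Xint g xt)))"
    unfolding xt_eq by (rule surplus_rescaled_threshold) (use k in simp)
  also have "\<dots> = k powr (1 - g) * surplus (k powr (g / 2) * s0)"
    unfolding scale ..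
  also have "\<dots> \<le> k powr (1 - g) * (k powr (g / 2) * surplus s0)"
    using surplus_scale_le[OF _ s0, of "k powr (g / 2)"] k g by (simp add: ge_one_powr_ge_zero)
  also have "\<dots> = k powr (1 - g / 2) * surplus s0"
    using k by (simp add: powr_add[symmetric])
  also have "\<dots> \<le> surplus s0"
    using powr_mono[of "1 - g / 2" 0 k] k g surplus_nonneg[OF s0]
    by (intro mult_left_le_one_le) auto
  finally show ?thesis unfolding s0_def .
qed

lemma welfare_less_at_x0:
  assumes xt: "xt > x0 g" and yt: "yt \<ge> y0 be"
  shows "welfare g be lam a phi xt yt < welfare g be lam a phi (x0 g) yt"
proof -
  define Y where "Y = Yint be yt"
  have Y: "Y > 0" using Xint_pos[OF be, of yt] yt y0_pos by (simp add: Y_def Yint_eq_Xint)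
  have T0: "T0 g be > 0" using Xbar_pos Ybar_pos by (simp add: T0_def)
  have "(LBINT x:{xt..}. phi (sqrt (T0 g be * Y) / sqrt (Xint g xt) * x) * x powr - g)
      \<le> (LBINT x:{x0 g..}. phi (sqrt (T0 g be * Y) / sqrt (Xint g (x0 g)) * x) * x powr - g)"
    using consumer_welfare_le[of xt "sqrt (T0 g be * Y)"] xt T0 Y
    by (simp add: Xint_x0[OF g] surplus_def)
  moreover have "sqrt (Xint g xt) < sqrt (Xint g (x0 g))"
    using Xint_strict_antimono[OF g x0_pos xt] by simp
  then have "lam * sqrt (T0 g be) * sqrt (Xint g xt) * sqrt Y
      < lam * sqrt (T0 g be) * sqrt (Xint g (x0 g)) * sqrt Y"
    using lam T0 Y by simp
  ultimately show ?thesis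
    unfolding welfare_def Y_def by linarith
qed

definition delivered_content :: "real \<Rightarrow> real" where
  "delivered_content y = sqrt (Ybar be * Yint be y)"

definition reduced_welfare :: "real \<Rightarrow> real" where
  "reduced_welfare c = surplus c + lam * Xbar g * c - a * c\<^sup>2 / Ybar be"

definition welfare_slope :: "real \<Rightarrow> real" where
  "welfare_slope c = marginal_surplus c + lam * Xbar g - 2 * a * c / Ybar be"

lemma Yint_pos: "y > 0 \<Longrightarrow> Yint be y > 0"
  using Xint_pos[OF be] by (simp add: Yint_eq_Xint)

lemma delivered_content_pos: "y > 0 \<Longrightarrow> delivered_content y > 0"
  using Yint_pos Ybar_pos by (simp add: delivered_content_def)

lemma delivered_content_square: "y > 0 \<Longrightarrow> (delivered_content y)\<^sup>2 = Ybar be * Yint be y"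
  using Yint_pos Ybar_pos by (simp add: delivered_content_def less_imp_le)

lemma delivered_content_y0: "delivered_content (y0 be) = Ybar be"
  using Ybar_pos by (simp add: delivered_content_def Yint_y0[OF be] power2_eq_square[symmetric])

lemma delivered_content_eq: "y > 0 \<Longrightarrow> delivered_content y = sqrt (Ybar be * (1 / (be - 2) * y powr (2 - be)))"
  using Xint_eq[OF be] by (simp add: delivered_content_def Yint_eq_Xint)

lemma delivered_content_strict_antimono: "0 < s \<Longrightarrow> s < t \<Longrightarrow> delivered_content t < delivered_content s"
  using Xint_strict_antimono[OF be] Ybar_pos by (simp add: delivered_content_def Yint_eq_Xint)

lemma delivered_content_inj: "0 < s \<Longrightarrow> 0 < t \<Longrightarrow> delivered_content s = delivered_content t \<Longrightarrow> s = t"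
  using delivered_content_strict_antimono by (metis less_irrefl linorder_neqE_linordered_idom)

lemma delivered_content_surj:
  assumes c: "0 < c" "c \<le> Ybar be"
  obtains y where "y \<ge> y0 be" "delivered_content y = c"
proof -
  define y where "y = ((be - 2) * (c\<^sup>2 / Ybar be)) powr (1 / (2 - be))"
  have y: "y > 0" using c be Ybar_pos by (simp add: y_def)
  have "Yint be y = c\<^sup>2 / Ybar be"
    using Xint_eq[OF be y] c be Ybar_pos by (simp add: Yint_eq_Xint y_def powr_powr)
  then have cy: "delivered_content y = c" using c Ybar_pos by (simp add: delivered_content_def)
  moreover have "y \<ge> y0 be"
  proof (rule ccontr)
    assume "\<not> y0 be \<le> y"
    then have "delivered_content (y0 be) < delivered_content y" using delivered_content_strict_antimono y by simp
    then show False using cy c delivered_content_y0 by simp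
  qed
  ultimately show ?thesis using that by blast
qed

lemma welfare_at_x0:
  assumes yt: "yt \<ge> y0 be"
  shows "welfare g be lam a phi (x0 g) yt = reduced_welfare (delivered_content yt)"
proof -
  define Y where "Y = Yint be yt"
  have Y: "Y > 0" using Yint_pos yt y0_pos by (simp add: Y_def)
  have c: "delivered_content yt = sqrt (Ybar be) * sqrt Y"
    by (simp add: delivered_content_def Y_def real_sqrt_mult)
  have "sqrt (T0 g be * Y) / sqrt (Xint g (x0 g)) = delivered_content yt"
    and "lam * sqrt (T0 g be) * sqrt (Xint g (x0 g)) * sqrt Y = lam * Xbar g * delivered_content yt"
    using Xbar_pos by (simp_all add: Xint_x0[OF g] T0_def c real_sqrt_mult)
  moreover have "a * Y = a * (delivered_content yt)\<^sup>2 / Ybar be"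
    using Ybar_pos Y by (simp add: c power_mult_distrib)
  ultimately show ?thesis
    unfolding welfare_def reduced_welfare_def surplus_def Y_def[symmetric] by simp
qed

text \<open>The surplus is concave in \<open>c\<close> and the cost term is an exact quadratic.\<close>
lemma reduced_welfare_le:
  assumes "c1 > 0" "c \<ge> 0"
  shows "reduced_welfare c
    \<le> reduced_welfare c1 + (c - c1) * welfare_slope c1 - a * (c - c1)\<^sup>2 / Ybar be"
proof -
  have "a * c\<^sup>2 / Ybar be
      = a * c1\<^sup>2 / Ybar be + (c - c1) * (2 * a * c1 / Ybar be) + a * (c - c1)\<^sup>2 / Ybar be"
    using Ybar_pos by (simp add: field_simps power2_eq_square)
  then show ?thesis
    using surplus_le_tangent[OF assms]
    unfolding reduced_welfare_def welfare_slope_def by (simp add: algebra_simps)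
qed

lemma a_crit_eq: "a_crit g be lam phi = (marginal_surplus (Ybar be) + lam * Xbar g) / 2"
  by (simp add: a_crit_def marginal_surplus_def mult.commute)

lemma welfare_slope_Ybar: "welfare_slope (Ybar be) = 2 * (a_crit g be lam phi - a)"
  using Ybar_pos by (simp add: welfare_slope_def a_crit_eq)

lemma a_crit_pos: "a_crit g be lam phi > 0"
  using marginal_surplus_nonneg[OF Ybar_pos] mult_pos_pos[OF lam Xbar_pos]
  by (simp add: a_crit_eq)

lemma reduced_welfare_less_Ybar:
  assumes "a \<le> a_crit g be lam phi" "0 < c" "c < Ybar be"
  shows "reduced_welfare c < reduced_welfare (Ybar be)"
proof -
  have slope: "welfare_slope (Ybar be) \<ge> 0" using assms(1) by (simp add: welfare_slope_Ybar)
  \<comment> \<open>If the slope vanishes then \<open>a = a_crit > 0\<close>, and the quadratic term is strict.\<close>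
  have "welfare_slope (Ybar be) > 0 \<or> a > 0"
    using a_crit_pos welfare_slope_Ybar by fastforce
  moreover have "c - Ybar be < 0" "(c - Ybar be)\<^sup>2 > 0" using assms by simp_all
  ultimately have "(c - Ybar be) * welfare_slope (Ybar be) < 0 \<or> a * (c - Ybar be)\<^sup>2 / Ybar be > 0"
    using Ybar_pos by (auto simp: mult_neg_pos)
  moreover have "(c - Ybar be) * welfare_slope (Ybar be) \<le> 0" "a * (c - Ybar be)\<^sup>2 / Ybar be \<ge> 0"
    using \<open>c - Ybar be < 0\<close> slope a Ybar_pos by (simp_all add: mult_nonpos_nonneg)
  ultimately show ?thesis using reduced_welfare_le[OF Ybar_pos, of c] assms(2) by linarith
qed

lemma reduced_welfare_less_root:
  assumes "a > 0" "cs > 0" "welfare_slope cs = 0" "c > 0" "c \<noteq> cs"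
  shows "reduced_welfare c < reduced_welfare cs"
proof -
  have "a * (c - cs)\<^sup>2 / Ybar be > 0" using assms Ybar_pos by simp
  then show ?thesis using reduced_welfare_le[of cs c] assms by simp
qed

lemma welfare_slope_strict_antimono:
  assumes "a > 0" "0 < c1" "c1 < c2"
  shows "welfare_slope c2 < welfare_slope c1"
proof -
  have "2 * a * c1 / Ybar be < 2 * a * c2 / Ybar be"
    using assms Ybar_pos by (simp add: divide_strict_right_mono)
  then show ?thesis
    using marginal_surplus_antimono[of c1 c2] assms by (simp add: welfare_slope_def)
qed

lemma welfare_slope_root:
  assumes "a > a_crit g be lam phi"
  obtains cs where "0 < cs" "cs < Ybar be" "welfare_slope cs = 0"
proof -
  have a0: "a > 0" using assms a_crit_pos by simp
  define c1 where "c1 = min (lam * Xbar g * Ybar be / (4 * a)) (Ybar be / 2)"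
  have c1: "0 < c1" "c1 < Ybar be"
    using a0 lam Xbar_pos Ybar_pos by (auto simp: c1_def)
  have "2 * a * c1 / Ybar be \<le> 2 * a * (lam * Xbar g * Ybar be / (4 * a)) / Ybar be"
    using a0 Ybar_pos by (intro divide_right_mono mult_left_mono) (auto simp: c1_def)
  also have "\<dots> = lam * Xbar g / 2"
    using a0 Ybar_pos by (simp add: field_simps)
  finally have "2 * a * c1 / Ybar be \<le> lam * Xbar g / 2" .
  then have "welfare_slope c1 > 0"
    using marginal_surplus_nonneg[OF c1(1)] mult_pos_pos[OF lam Xbar_pos]
    by (simp add: welfare_slope_def)
  moreover have "welfare_slope (Ybar be) < 0"
    using assms by (simp add: welfare_slope_Ybar)
  moreover have "continuous_on {c1..Ybar be} welfare_slope"
    unfolding welfare_slope_def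
    using continuous_on_marginal_surplus[OF c1(1)] Ybar_pos
    by (intro continuous_intros) (auto elim: continuous_on_subset)
  ultimately obtain cs where "cs \<in> {c1..Ybar be}" "welfare_slope cs = 0"
    using IVT2'[of welfare_slope "Ybar be" 0 c1] c1 by force
  moreover then have "cs \<noteq> Ybar be" using \<open>welfare_slope (Ybar be) < 0\<close> by auto
  ultimately show ?thesis using that c1 by (meson atLeastAtMost_iff less_le_trans order_le_neq_trans)
qed

lemma yhat_eq_iff:
  assumes yh: "yh \<ge> y0 be"
  shows "yhat_eq g be lam a phi yh \<longleftrightarrow> welfare_slope (delivered_content yh) = 0"
proof -
  define c where "c = delivered_content yh"
  have Y: "Yint be yh > 0" using Yint_pos yh y0_pos by simp
  have c: "c > 0" using delivered_content_pos yh y0_pos by (simp add: c_def)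
  have ratio: "A * sqrt (Ybar be) / sqrt (Yint be yh) = A * (Ybar be / c)" for A
    using Ybar_pos Y by (simp add: c_def delivered_content_def real_sqrt_mult field_simps)
  have "(LBINT x:{x0 g..}. deriv phi (x * sqrt (Ybar be * Yint be yh)) * x powr (1 - g))
      = marginal_surplus c"
    by (simp add: marginal_surplus_def c_def delivered_content_def mult.commute)
  then have "yhat_eq g be lam a phi yh
      \<longleftrightarrow> a - 1/2 * (marginal_surplus c + lam * Xbar g) * (Ybar be / c) = 0"
    by (simp only: yhat_eq_def ratio)
  also have "\<dots> \<longleftrightarrow> welfare_slope c = 0"
    using c Ybar_pos by (auto simp: welfare_slope_def field_simps)
  finally show ?thesis unfolding c_def .
qed

lemma welfare_opt_iff:
  assumes yo: "yo \<ge> y0 be"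
    and max: "\<And>y. y \<ge> y0 be \<Longrightarrow> y \<noteq> yo \<Longrightarrow>
      welfare g be lam a phi (x0 g) y < welfare g be lam a phi (x0 g) yo"
  shows "welfare_opt g be lam a phi xt yt \<longleftrightarrow> xt = x0 g \<and> yt = yo"
proof -
  have le: "welfare g be lam a phi x y \<le> welfare g be lam a phi (x0 g) yo"
    if "x \<ge> x0 g" "y \<ge> y0 be" for x y
  proof -
    have "welfare g be lam a phi x y \<le> welfare g be lam a phi (x0 g) y"
      using welfare_less_at_x0[of x y] that by (cases "x = x0 g") auto
    also have "\<dots> \<le> welfare g be lam a phi (x0 g) yo"
      using max[of y] that by (cases "y = yo") auto
    finally show ?thesis .
  qed
  have "xt = x0 g \<and> yt = yo" if "xt \<ge> x0 g" "yt \<ge> y0 be"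
    "welfare g be lam a phi (x0 g) yo \<le> welfare g be lam a phi xt yt"
  proof -
    have "\<not> xt > x0 g" using welfare_less_at_x0[of xt yt] le[of "x0 g" yt] that by fastforce
    moreover have "\<not> (xt = x0 g \<and> yt \<noteq> yo)" using max[of yt] that by fastforce
    ultimately show ?thesis using that(1) by fastforce
  qed
  then show ?thesis
    using le yo unfolding welfare_opt_def by (fastforce simp: x0_pos)
qed

lemma speed_at_x0:
  assumes "yt \<ge> y0 be"
  shows "T0 g be / traffic g be (x0 g) yt = Ybar be / delivered_content yt"
proof -
  have Y: "Yint be yt > 0" using Yint_pos assms y0_pos by simp
  have "traffic g be (x0 g) yt = Xbar g * delivered_content yt"
    using Xbar_pos Ybar_pos Y
    by (simp add: traffic_def delivered_content_def Xint_x0[OF g] T0_def real_sqrt_mult)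
  then show ?thesis using Xbar_pos by (simp add: T0_def)
qed

lemma cp_util_at_x0:
  assumes "yt \<ge> y0 be"
  shows "cp_util g be lam a b (x0 g) yt y = y * (lam * Xbar g * Ybar be / delivered_content yt - b - a)"
proof -
  have "(LBINT x:{x0 g..}. T0 g be / traffic g be (x0 g) yt * x powr (1 - g) * y)
      = (LBINT x:{x0 g..}. (T0 g be / traffic g be (x0 g) yt * y) * x powr (1 - g))"
    by (simp add: ac_simps)
  also have "\<dots> = T0 g be / traffic g be (x0 g) yt * y * Xbar g"
    using Xint_x0[OF g] unfolding Xint_def by (simp only: set_integral_mult_right)
  finally have "(LBINT x:{x0 g..}. T0 g be / traffic g be (x0 g) yt * x powr (1 - g) * y)
      = Ybar be / delivered_content yt * y * Xbar g"
    unfolding speed_at_x0[OF assms] .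
  then show ?thesis by (simp add: cp_util_def algebra_simps)
qed

lemma cons_util_at_x0:
  assumes yt: "yt \<ge> y0 be"
  shows "cons_util g be phi c (x0 g) yt (x0 g) = phi (delivered_content yt * x0 g) - c"
proof -
  have c: "delivered_content yt > 0" using delivered_content_pos yt y0_pos by simp
  have "(LBINT y:{yt..}. T0 g be / traffic g be (x0 g) yt * x0 g * y powr (1 - be))
      = Ybar be / delivered_content yt * x0 g * Yint be yt"
    unfolding Yint_def speed_at_x0[OF yt] by (rule set_integral_mult_right)
  also have "\<dots> = delivered_content yt * x0 g"
    using c delivered_content_square[of yt] yt y0_pos by (simp add: field_simps power2_eq_square)
  finally show ?thesis by (simp add: cons_util_def)
qed

lemma implements_at_x0:
  assumes impl: "implements g be lam a phi b c (x0 g) yt" and yt: "yt \<ge> y0 be"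
  shows "b \<le> lam * Xbar g * Ybar be / delivered_content yt - a"
    and "yt > y0 be \<Longrightarrow> b = lam * Xbar g * Ybar be / delivered_content yt - a"
    and "c \<le> phi (delivered_content yt * x0 g)"
proof -
  have "0 \<le> yt * (lam * Xbar g * Ybar be / delivered_content yt - b - a)"
    using impl yt cp_util_at_x0[OF yt] unfolding implements_def by auto
  then show upper: "b \<le> lam * Xbar g * Ybar be / delivered_content yt - a"
    using yt y0_pos by (simp add: zero_le_mult_iff)
  \<comment> \<open>The lowest CP type \<open>y0 be\<close> is excluded, so its utility is nonpositive.\<close>
  assume "yt > y0 be"
  then have "y0 be * (lam * Xbar g * Ybar be / delivered_content yt - b - a) \<le> 0"
    using impl cp_util_at_x0[OF yt] unfolding implements_def by auto
  then show "b = lam * Xbar g * Ybar be / delivered_content yt - a"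
    using upper y0_pos by (simp add: mult_le_0_iff)
next
  show "c \<le> phi (delivered_content yt * x0 g)"
    using impl cons_util_at_x0[OF yt] unfolding implements_def by auto
qed

lemma welfare_opt_subcritical:
  assumes "a \<le> a_crit g be lam phi"
  shows "welfare_opt g be lam a phi xt yt \<longleftrightarrow> xt = x0 g \<and> yt = y0 be"
proof (rule welfare_opt_iff)
  fix y assume y: "y \<ge> y0 be" "y \<noteq> y0 be"
  then have "0 < delivered_content y" "delivered_content y < Ybar be"
    using delivered_content_pos delivered_content_strict_antimono[OF y0_pos] delivered_content_y0 y0_pos
    by auto
  then show "welfare g be lam a phi (x0 g) y < welfare g be lam a phi (x0 g) (y0 be)"
    using reduced_welfare_less_Ybar[OF assms] welfare_at_x0 y delivered_content_y0 by simp
qed simp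

lemma implements_subcritical:
  assumes "implements g be lam a phi b c (x0 g) (y0 be)"
  shows "b \<le> lam / (g - 2) * x0 g powr (2 - g) - a \<and> c \<le> phi (1 / (be - 2) * y0 be powr (2 - be) * x0 g)"
proof -
  have "lam / (g - 2) * x0 g powr (2 - g) = lam * Xbar g * Ybar be / delivered_content (y0 be)"
    using Ybar_pos by (simp add: delivered_content_y0 Xbar_def)
  moreover have "1 / (be - 2) * y0 be powr (2 - be) = delivered_content (y0 be)"
    by (simp add: delivered_content_y0 Ybar_def)
  ultimately show ?thesis
    using implements_at_x0(1,3)[OF assms] by simp
qed

lemma yhat_unique:
  assumes "a > a_crit g be lam phi"
  shows "\<exists>!yh. yh \<ge> y0 be \<and> yhat_eq g be lam a phi yh"
proof -
  have a0: "a > 0" using assms a_crit_pos by simp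
  obtain cs where cs: "0 < cs" "cs < Ybar be" "welfare_slope cs = 0"
    using welfare_slope_root[OF assms] .
  obtain yh where yh: "yh \<ge> y0 be" "delivered_content yh = cs"
    using delivered_content_surj[of cs] cs by auto
  have "y = yh" if "y \<ge> y0 be" "welfare_slope (delivered_content y) = 0" for y
  proof -
    have "delivered_content y = cs"
      using welfare_slope_strict_antimono[OF a0] cs that delivered_content_pos[of y] y0_pos
      by (metis linorder_neqE_linordered_idom order_less_le_trans order_less_irrefl)
    then show ?thesis
      using delivered_content_inj yh that y0_pos by (metis order_less_le_trans)
  qed
  then show ?thesis using yh cs yhat_eq_iff by blast
qed

lemma welfare_opt_supercritical:
  assumes "a > a_crit g be lam phi" and yh: "yh \<ge> y0 be" "yhat_eq g be lam a phi yh"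
  shows "welfare_opt g be lam a phi xt yt \<longleftrightarrow> xt = x0 g \<and> yt = yh"
proof (rule welfare_opt_iff)
  have a0: "a > 0" using assms a_crit_pos by simp
  fix y assume y: "y \<ge> y0 be" "y \<noteq> yh"
  then have "delivered_content y \<noteq> delivered_content yh" "delivered_content y > 0"
    using delivered_content_inj delivered_content_pos yh y0_pos by (auto dest: order_less_le_trans)
  then show "welfare g be lam a phi (x0 g) y < welfare g be lam a phi (x0 g) yh"
    using reduced_welfare_less_root[OF a0] delivered_content_pos yhat_eq_iff yh y y0_pos welfare_at_x0
    by (smt (verit))
qed (use yh in simp)

lemma implements_supercritical:
  assumes "a > a_crit g be lam phi" and yh: "yh \<ge> y0 be" "yhat_eq g be lam a phi yh"
    and impl: "implements g be lam a phi b c (x0 g) yh"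
  shows "b = (2 * lam / (1 / Xbar g * marginal_surplus (delivered_content yh) + lam) - 1) * a"
    and "c \<le> phi (delivered_content yh * x0 g)"
proof -
  define cs where "cs = delivered_content yh"
  have a0: "a > 0" using assms a_crit_pos by simp
  have cs: "cs > 0" "welfare_slope cs = 0"
    using delivered_content_pos yhat_eq_iff yh y0_pos by (auto simp: cs_def)
  then have "yh \<noteq> y0 be"
    using welfare_slope_Ybar delivered_content_y0 assms(1) by (auto simp: cs_def)
  then have "b = lam * Xbar g * Ybar be / cs - a"
    using implements_at_x0(2)[OF impl yh(1)] yh by (simp add: cs_def)
  \<comment> \<open>At the root, \<open>marginal_surplus cs + lam * Xbar g = 2 * a * cs / Ybar be\<close>.\<close>
  also have "\<dots> = (2 * lam / (1 / Xbar g * marginal_surplus cs + lam) - 1) * a"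
  proof -
    have "1 / Xbar g * marginal_surplus cs + lam = 2 * a * cs / (Xbar g * Ybar be)"
      using cs Xbar_pos Ybar_pos by (simp add: welfare_slope_def field_simps)
    then have "2 * lam / (1 / Xbar g * marginal_surplus cs + lam) = lam * Xbar g * Ybar be / (a * cs)"
      by simp
    then show ?thesis
      using cs a0 by (simp add: field_simps)
  qed
  finally show "b = (2 * lam / (1 / Xbar g * marginal_surplus (delivered_content yh) + lam) - 1) * a"
    by (simp add: cs_def)
  show "c \<le> phi (delivered_content yh * x0 g)"
    using implements_at_x0(3)[OF impl yh(1)] .
qed

end

theorem theorem3:
  fixes g be lam a :: real and phi :: "real \<Rightarrow> real"
  assumes hg: "g > 2" and hbe: "be > 2" and hlam: "lam > 0" and ha: "a \<ge> 0"
    and hdiff: "phi differentiable_on {0..}"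
    and hnonneg: "\<forall>t\<ge>0. phi t \<ge> 0"
    and hmono: "mono_on {0..} phi"
    and hconc: "concave_on {0..} phi"
  shows
    "(a \<le> a_crit g be lam phi \<longrightarrow>
        (\<forall>xt yt. welfare_opt g be lam a phi xt yt \<longleftrightarrow> xt = x0 g \<and> yt = y0 be) \<and>
        (\<forall>b c. implements g be lam a phi b c (x0 g) (y0 be) \<longrightarrow>
            b \<le> lam / (g - 2) * x0 g powr (2 - g) - a \<and>
            c \<le> phi (1 / (be - 2) * y0 be powr (2 - be) * x0 g)))
   \<and> (a > a_crit g be lam phi \<longrightarrow>
        (\<exists>!yh. yh \<ge> y0 be \<and> yhat_eq g be lam a phi yh) \<and>
        (\<forall>yh. yh \<ge> y0 be \<and> yhat_eq g be lam a phi yh \<longrightarrow>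
           (\<forall>xt yt. welfare_opt g be lam a phi xt yt \<longleftrightarrow> xt = x0 g \<and> yt = yh) \<and>
           (\<forall>b c. implements g be lam a phi b c (x0 g) yh \<longrightarrow>
              b = (2 * lam / (1 / Xbar g *
                     (LBINT x:{x0 g..}. deriv phi (sqrt (Ybar be * (1 / (be - 2) * yh powr (2 - be))) * x)
                                        * x powr (1 - g)) + lam) - 1) * a \<and>
              c \<le> phi (sqrt (Ybar be * (1 / (be - 2) * yh powr (2 - be))) * x0 g))))"
proof -
  interpret market phi g be lam a
    by unfold_locales (use assms in auto)
  have content: "sqrt (Ybar be * yh powr (2 - be) / (be - 2)) = delivered_content yh"
    if "yh \<ge> y0 be" for yh
    using delivered_content_eq[of yh] that y0_pos by simp
  show ?thesis
    using welfare_opt_subcritical implements_subcritical yhat_unique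
      welfare_opt_supercritical implements_supercritical
    by (auto simp: content marginal_surplus_def)
qed

end
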